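(* Let $c\ge0$. Let $w^*$ be an optimal solution, with optimal value $\lambda_n^*$, of $$\min_{w,\lambda_n}\ \lambda_n\quad\text{s.t.}\quad \sum_{\{i,j\}\in E_3}w_{ij}L_{ij}+L_0-\lambda_nI\preceq 0,\ \ \sum_{\{i,j\}\in E_3}w_{ij}\ge c,\ \ w_{ij}\ge0,$$ and let $(\xi,v_1,\dots,v_n)$ be an optimal solution of the embedding problem $$\max_{v_i\in\mathbb{R}^n,\ \xi\in\mathbb{R}}\ c\xi+\sum_{\{i,j\}\in E_1\cup E_2}\|v_i-v_j\|^2\quad\text{s.t.}\quad \|v_i-v_j\|^2\ge\xi\ \ \forall\{i,j\}\in E_3,\ \ \sum_{i\in V}\|v_i\|^2=1.$$ Then for every $p\in\mathbb{R}^n$ the projected vector $y=(p^Tv_1,\dots,p^Tv_n)^T$ satisfies $L(w^* )y=\lambda_n^*y$, where $L(w^* )=\sum_{\{i,j\}\in E_3}w^*_{ij}L_{ij}+L_0$; i.e. projecting the optimal embedding onto a one-dimensional subspace yields an eigenvector for the largest eigenvalue $\lambda_n^*$.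
   Context: A multiplex network consists of two layers $G_1=(V_1,E_1)$ and $G_2=(V_2,E_2)$, simple undirected graphs with $|V_1|=|V_2|=N$; vertices of $G_1$ are numbered $1,\dots,N$, those of $G_2$ are numbered $N+1,\dots,2N$, $n=2N$, $V=V_1\cup V_2$. The interlayer edges form the perfect matching $E_3=\{\{i,N+i\}:i=1,\dots,N\}$ with nonnegative weights $w_{ij}$. $L_{ij}=(\delta_i-\delta_j)(\delta_i-\delta_j)^T$, $\delta_i$ the $i$-th standard basis vector of $\mathbb{R}^n$; $L_0=\sum_{\{i,j\}\in E_1\cup E_2}L_{ij}$. *)

theory Defs
  imports Complex_Main
begin

text \<open>Vertices are the naturals 1..n with n = 2N; layer 1 is {1..N},
layer 2 is {N+1..2N}. Vectors of R^m are functions nat => real, used on indices {1..m};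
n x n matrices are functions nat => nat => real, used on {1..n} x {1..n}.
An undirected edge {i,j} of a simple graph is represented by the ordered pair (i,j) with i < j.
Interlayer edge {i, N+i} carries weight w i.\<close>

definition delta :: "nat \<Rightarrow> nat \<Rightarrow> real" where
  "delta i a = (if a = i then 1 else 0)"

definition Lij :: "nat \<Rightarrow> nat \<Rightarrow> nat \<Rightarrow> nat \<Rightarrow> real" where
  "Lij i j a b = (delta i a - delta j a) * (delta i b - delta j b)"

definition simple_graph_on :: "nat set \<Rightarrow> (nat \<times> nat) set \<Rightarrow> bool" where
  "simple_graph_on V E \<longleftrightarrow> (\<forall>(i,j)\<in>E. i \<in> V \<and> j \<in> V \<and> i < j)"

definition L0 :: "(nat \<times> nat) set \<Rightarrow> (nat \<times> nat) set \<Rightarrow> nat \<Rightarrow> nat \<Rightarrow> real" where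
  "L0 E1 E2 a b = (\<Sum>(i,j)\<in>E1 \<union> E2. Lij i j a b)"

definition Lw :: "nat \<Rightarrow> (nat \<times> nat) set \<Rightarrow> (nat \<times> nat) set \<Rightarrow> (nat \<Rightarrow> real) \<Rightarrow> nat \<Rightarrow> nat \<Rightarrow> real" where
  "Lw N E1 E2 w a b = (\<Sum>i\<in>{1..N}. w i * Lij i (N + i) a b) + L0 E1 E2 a b"

definition nsd :: "nat \<Rightarrow> (nat \<Rightarrow> nat \<Rightarrow> real) \<Rightarrow> bool" where
  "nsd m A \<longleftrightarrow> (\<forall>x :: nat \<Rightarrow> real. (\<Sum>a\<in>{1..m}. \<Sum>b\<in>{1..m}. x a * A a b * x b) \<le> 0)"

definition idm :: "nat \<Rightarrow> nat \<Rightarrow> real" where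
  "idm a b = (if a = b then 1 else 0)"

definition primal_feasible ::
  "nat \<Rightarrow> (nat \<times> nat) set \<Rightarrow> (nat \<times> nat) set \<Rightarrow> real \<Rightarrow> (nat \<Rightarrow> real) \<Rightarrow> real \<Rightarrow> bool" where
  "primal_feasible N E1 E2 c w lam \<longleftrightarrow>
     nsd (2*N) (\<lambda>a b. Lw N E1 E2 w a b - lam * idm a b) \<and>
     (\<Sum>i\<in>{1..N}. w i) \<ge> c \<and> (\<forall>i\<in>{1..N}. w i \<ge> 0)"

definition primal_optimal ::
  "nat \<Rightarrow> (nat \<times> nat) set \<Rightarrow> (nat \<times> nat) set \<Rightarrow> real \<Rightarrow> (nat \<Rightarrow> real) \<Rightarrow> real \<Rightarrow> bool" where
  "primal_optimal N E1 E2 c w lam \<longleftrightarrow> primal_feasible N E1 E2 c w lam \<and>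
     (\<forall>w' lam'. primal_feasible N E1 E2 c w' lam' \<longrightarrow> lam \<le> lam')"

definition sqdist :: "nat \<Rightarrow> (nat \<Rightarrow> real) \<Rightarrow> (nat \<Rightarrow> real) \<Rightarrow> real" where
  "sqdist m x y = (\<Sum>k\<in>{1..m}. (x k - y k)^2)"

definition sqnorm :: "nat \<Rightarrow> (nat \<Rightarrow> real) \<Rightarrow> real" where
  "sqnorm m x = (\<Sum>k\<in>{1..m}. (x k)^2)"

definition embed_feasible ::
  "nat \<Rightarrow> real \<Rightarrow> (nat \<Rightarrow> nat \<Rightarrow> real) \<Rightarrow> bool" where
  "embed_feasible N xi v \<longleftrightarrow>
     (\<forall>i\<in>{1..N}. sqdist (2*N) (v i) (v (N + i)) \<ge> xi) \<and>
     (\<Sum>i\<in>{1..2*N}. sqnorm (2*N) (v i)) = 1"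

definition embed_obj ::
  "nat \<Rightarrow> (nat \<times> nat) set \<Rightarrow> (nat \<times> nat) set \<Rightarrow> real \<Rightarrow> real \<Rightarrow> (nat \<Rightarrow> nat \<Rightarrow> real) \<Rightarrow> real" where
  "embed_obj N E1 E2 c xi v = c * xi + (\<Sum>(i,j)\<in>E1 \<union> E2. sqdist (2*N) (v i) (v j))"

definition embed_optimal ::
  "nat \<Rightarrow> (nat \<times> nat) set \<Rightarrow> (nat \<times> nat) set \<Rightarrow> real \<Rightarrow> real \<Rightarrow> (nat \<Rightarrow> nat \<Rightarrow> real) \<Rightarrow> bool" where
  "embed_optimal N E1 E2 c xi v \<longleftrightarrow> embed_feasible N xi v \<and>
     (\<forall>xi' v'. embed_feasible N xi' v' \<longrightarrow> embed_obj N E1 E2 c xi' v' \<le> embed_obj N E1 E2 c xi v)"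

end

theory Submission
  imports Defs "HOL-Analysis.Analysis"
begin

text \<open>The semidefinite program and the embedding problem have the same optimal value \<open>g\<close>.
  The inequality \<open>\<lambda>\<^sub>n\<^sup>* \<le> g\<close> is a minimax argument. For unit-norm embeddings \<open>V\<close> the vectors
  \<open>\<Phi>(V)\<^sub>i = \<Sum>\<^bsub>E\<^sub>1\<union>E\<^sub>2\<^esub> |V\<^sub>a - V\<^sub>b|\<^sup>2 + c |V\<^sub>i - V\<^bsub>N+i\<^esub>|\<^sup>2 - g\<close> form a compact convex family:
  \<open>\<Phi>(V)\<close> depends only on the Gram matrix of \<open>V\<close>, and Householder reflections realise every
  convex combination of Gram matrices of \<open>n\<close> vectors by \<open>n\<close> vectors in \<open>\<real>\<^sup>n\<close>. Optimality of the
  embedding gives every \<open>\<Phi>(V)\<close> a nonpositive coordinate, so separation yields probability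
  weights \<open>\<omega>\<close> with \<open>\<omega> \<cdot> \<Phi>(V) \<le> \<delta>\<close> for all \<open>V\<close>; testing them on one-dimensional embeddings
  shows that \<open>w = c\<omega>\<close> is feasible with value \<open>g + \<delta>\<close>. Conversely, the quadratic form of the
  negative semidefinite matrix \<open>L(w\<^sup>*) - \<lambda>\<^sub>n\<^sup>* I\<close>, summed over the columns of the optimal
  embedding, is at least \<open>g - \<lambda>\<^sub>n\<^sup>* \<ge> 0\<close>. Hence every column, and every linear combination of
  the columns, is a null vector of \<open>L(w\<^sup>*) - \<lambda>\<^sub>n\<^sup>* I\<close>.\<close>

section \<open>Gram matrices in fixed dimension\<close>

lemma dependent_if_card_gt_support:
  fixes u :: "nat \<Rightarrow> nat \<Rightarrow> real"
  assumes "finite J" and "card J > m" and "\<forall>k\<in>J. \<forall>a. a \<notin> {1..m} \<longrightarrow> u k a = 0"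
  shows "\<exists>q. (\<exists>k\<in>J. q k \<noteq> 0) \<and> (\<forall>a. (\<Sum>k\<in>J. q k * u k a) = 0)"
  using assms
proof (induction m arbitrary: J u)
  case 0
  then obtain k0 where "k0 \<in> J" by fastforce
  with 0 show ?case
    by (intro exI[of _ "\<lambda>k. if k = k0 then 1 else 0"]) auto
next
  case (Suc m)
  show ?case
  proof (cases "\<forall>k\<in>J. u k (Suc m) = 0")
    case True
    then have "\<forall>k\<in>J. \<forall>a. a \<notin> {1..m} \<longrightarrow> u k a = 0"
      using Suc.prems(3) by (metis atLeastAtMost_iff le_Suc_eq)
    then show ?thesis using Suc.IH[of J u] Suc.prems by auto
  next
    case False
    then obtain j where j: "j \<in> J" "u j (Suc m) \<noteq> 0" by blast
    define J' where "J' = J - {j}"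
    \<comment> \<open>Gaussian elimination of the last coordinate against the pivot \<open>u j\<close>.\<close>
    define u' where "u' = (\<lambda>k a. u k a - u k (Suc m) / u j (Suc m) * u j a)"
    have J': "finite J'" "card J' > m" using Suc.prems j unfolding J'_def by auto
    have "\<forall>k\<in>J'. \<forall>a. a \<notin> {1..m} \<longrightarrow> u' k a = 0"
    proof (intro ballI allI impI)
      fix k a assume "k \<in> J'" and a: "a \<notin> {1..m}"
      then show "u' k a = 0"
        using Suc.prems(3) j unfolding u'_def J'_def
        by (cases "a = Suc m") auto
    qed
    from Suc.IH[OF J' this] obtain q' where
      q': "\<exists>k\<in>J'. q' k \<noteq> 0" "\<forall>a. (\<Sum>k\<in>J'. q' k * u' k a) = 0" by blast
    define q where
      "q = (\<lambda>k. if k = j then - (\<Sum>l\<in>J'. q' l * u l (Suc m)) / u j (Suc m) else q' k)"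
    have "(\<Sum>k\<in>J. q k * u k a) = 0" for a
    proof -
      have "(\<Sum>k\<in>J. q k * u k a) = q j * u j a + (\<Sum>k\<in>J'. q k * u k a)"
        using j Suc.prems(1) unfolding J'_def by (simp add: sum.remove)
      also have "(\<Sum>k\<in>J'. q k * u k a) = (\<Sum>k\<in>J'. q' k * u k a)"
        unfolding q_def J'_def by (intro sum.cong) auto
      also have "q j * u j a = - (\<Sum>k\<in>J'. q' k * (u k (Suc m) / u j (Suc m) * u j a))"
        unfolding q_def by (simp add: sum_distrib_right sum_divide_distrib mult.assoc)
      also have "- (\<Sum>k\<in>J'. q' k * (u k (Suc m) / u j (Suc m) * u j a)) + (\<Sum>k\<in>J'. q' k * u k a)
          = (\<Sum>k\<in>J'. q' k * u' k a)"
        unfolding u'_def by (simp add: sum_subtractf[symmetric] right_diff_distrib)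
      finally show ?thesis using q'(2) by simp
    qed
    moreover have "\<exists>k\<in>J. q k \<noteq> 0" using q'(1) unfolding q_def J'_def by auto
    ultimately show ?thesis by blast
  qed
qed

definition householder :: "nat set \<Rightarrow> (nat \<Rightarrow> real) \<Rightarrow> (nat \<Rightarrow> real) \<Rightarrow> nat \<Rightarrow> real" where
  "householder J u x = (\<lambda>k. x k - 2 * (\<Sum>l\<in>J. x l * u l) / (\<Sum>l\<in>J. u l * u l) * u k)"

lemma householder_inner:
  assumes "(\<Sum>k\<in>J. u k * u k) \<noteq> 0"
  shows "(\<Sum>k\<in>J. householder J u x k * householder J u y k) = (\<Sum>k\<in>J. x k * y k)"
proof -
  define U where "U = (\<Sum>k\<in>J. u k * u k)"
  define ax where "ax = (\<Sum>l\<in>J. x l * u l)"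
  define ay where "ay = (\<Sum>l\<in>J. y l * u l)"
  have "(\<Sum>k\<in>J. householder J u x k * householder J u y k) =
      (\<Sum>k\<in>J. x k * y k - 2 * ay / U * (x k * u k) - 2 * ax / U * (y k * u k)
                 + 4 * ax * ay / (U * U) * (u k * u k))"
    unfolding householder_def U_def ax_def ay_def by (intro sum.cong) (simp_all add: algebra_simps)
  also have "\<dots> = (\<Sum>k\<in>J. x k * y k) - 2 * ay / U * ax - 2 * ax / U * ay + 4 * ax * ay / (U * U) * U"
    unfolding U_def ax_def ay_def by (simp add: sum.distrib sum_subtractf sum_distrib_left)
  also have "\<dots> = (\<Sum>k\<in>J. x k * y k)"
    using assms unfolding U_def[symmetric] by (simp add: field_simps)
  finally show ?thesis .
qed

lemma isometry_into_coordinate_hyperplane: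
  fixes q :: "nat \<Rightarrow> real"
  assumes J: "finite J" "k0 \<in> J" and q: "\<exists>k\<in>J. q k \<noteq> 0"
  shows "\<exists>T. (\<forall>x y. (\<Sum>k\<in>J. T x k * T y k) = (\<Sum>k\<in>J. x k * y k)) \<and>
             (\<forall>x. (\<Sum>k\<in>J. x k * q k) = 0 \<longrightarrow> T x k0 = 0)"
proof -
  define s where "s = sqrt (\<Sum>k\<in>J. q k * q k)"
  obtain k1 where k1: "k1 \<in> J" "q k1 \<noteq> 0" using q by blast
  have "0 < q k1 * q k1" using k1(2) not_real_square_gt_zero by blast
  then have "(\<Sum>k\<in>J. q k * q k) > 0"
    using J(1) k1(1) by (intro sum_pos2[of J k1]) auto
  then have s: "s > 0" "s * s = (\<Sum>k\<in>J. q k * q k)"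
    unfolding s_def by simp_all
  \<comment> \<open>The Householder reflection exchanging \<open>q\<close> with \<open>s\<close> times the \<open>k0\<close>-th unit vector.\<close>
  define u where "u = (\<lambda>k. q k - (if k = k0 then s else 0))"
  have "(\<Sum>k\<in>J. u k * u k) = u k0 * u k0 + (\<Sum>k\<in>J - {k0}. u k * u k)"
    using J by (simp add: sum.remove)
  also have "(\<Sum>k\<in>J - {k0}. u k * u k) = (\<Sum>k\<in>J - {k0}. q k * q k)"
    unfolding u_def by (intro sum.cong) auto
  also have "(\<Sum>k\<in>J - {k0}. q k * q k) = s * s - q k0 * q k0"
    using s(2) J by (simp add: sum.remove)
  finally have U: "(\<Sum>k\<in>J. u k * u k) = 2 * s * (s - q k0)"
    unfolding u_def by (simp add: algebra_simps)
  have xu: "(\<Sum>l\<in>J. x l * u l) = - s * x k0" if "(\<Sum>k\<in>J. x k * q k) = 0" for x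
  proof -
    have "(\<Sum>l\<in>J. x l * u l) = (\<Sum>l\<in>J. x l * q l) - (\<Sum>l\<in>J. if l = k0 then x l * s else 0)"
      unfolding u_def by (simp add: sum_subtractf[symmetric] right_diff_distrib if_distrib cong: if_cong)
    then show ?thesis using that J by simp
  qed
  show ?thesis
  proof (cases "s = q k0")
    case True
    then have "(\<Sum>k\<in>J. u k * u k) = 0" using U by simp
    then have "\<forall>k\<in>J. u k = 0"
      using sum_nonneg_eq_0_iff[OF J(1), of "\<lambda>k. u k * u k"] by simp
    then have "(\<Sum>k\<in>J. x k * q k) = 0 \<longrightarrow> x k0 = 0" for x
      using xu[of x] s(1) by (simp add: sum.neutral)
    then show ?thesis by (intro exI[of _ id]) simp
  next
    case False
    have "householder J u x k0 = 0" if "(\<Sum>k\<in>J. x k * q k) = 0" for x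
      unfolding householder_def xu[OF that] U using s(1) False by (simp add: u_def field_simps)
    moreover have "(\<Sum>k\<in>J. u k * u k) \<noteq> 0" using U s(1) False by simp
    ultimately show ?thesis
      by (intro exI[of _ "householder J u"]) (simp add: householder_inner)
  qed
qed

lemma gram_in_dimension:
  fixes W :: "nat \<Rightarrow> nat \<Rightarrow> real"
  assumes "finite J"
  shows "\<exists>V. \<forall>i\<in>{1..m}. \<forall>j\<in>{1..m}.
           (\<Sum>k\<in>{1..m}. V i k * V j k) = (\<Sum>k\<in>J. W i k * W j k)"
  using assms
proof (induction "card J" arbitrary: J W rule: less_induct)
  case less
  show ?case
  proof (cases "card J \<le> m")
    case True
    obtain h where h: "bij_betw h {1..card J} J"
      using ex_bij_betw_nat_finite_1[OF less.prems] by blast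
    define V where "V = (\<lambda>i k. if k \<in> {1..card J} then W i (h k) else 0)"
    have "(\<Sum>k\<in>{1..m}. V i k * V j k) = (\<Sum>k\<in>J. W i k * W j k)" for i j
    proof -
      have "(\<Sum>k\<in>{1..m}. V i k * V j k) = (\<Sum>k\<in>{1..card J}. V i k * V j k)"
        using True by (intro sum.mono_neutral_right) (auto simp: V_def)
      also have "\<dots> = (\<Sum>k\<in>{1..card J}. W i (h k) * W j (h k))" by (simp add: V_def)
      also have "\<dots> = (\<Sum>k\<in>J. W i k * W j k)"
        using sum.reindex_bij_betw[OF h, of "\<lambda>k. W i k * W j k"] .
      finally show ?thesis .
    qed
    then show ?thesis by blast
  next
    case False
    \<comment> \<open>The \<open>m\<close> rows span at most \<open>m\<close> dimensions, so an isometry moves them off one coordinate.\<close>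
    have "\<exists>q. (\<exists>k\<in>J. q k \<noteq> 0) \<and> (\<forall>a. (\<Sum>k\<in>J. q k * (if a \<in> {1..m} then W a k else 0)) = 0)"
      using False by (intro dependent_if_card_gt_support[OF less.prems]) auto
    then obtain q where q: "\<exists>k\<in>J. q k \<noteq> 0"
      "\<forall>a. (\<Sum>k\<in>J. q k * (if a \<in> {1..m} then W a k else 0)) = 0"
      by blast
    then obtain k0 where k0: "k0 \<in> J" by blast
    obtain T where T: "\<And>x y. (\<Sum>k\<in>J. T x k * T y k) = (\<Sum>k\<in>J. x k * y k)"
      "\<And>x. (\<Sum>k\<in>J. x k * q k) = 0 \<Longrightarrow> T x k0 = 0"
      using isometry_into_coordinate_hyperplane[OF less.prems k0 q(1)] by blast
    define W' where "W' = (\<lambda>i. T (W i))"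
    have W'0: "W' i k0 = 0" if "i \<in> {1..m}" for i
      using T(2) q(2)[rule_format, of i] that unfolding W'_def by (simp add: mult.commute)
    have "card (J - {k0}) < card J" using k0 less.prems by (meson card_Diff1_less)
    then obtain V where V: "\<forall>i\<in>{1..m}. \<forall>j\<in>{1..m}.
        (\<Sum>k\<in>{1..m}. V i k * V j k) = (\<Sum>k\<in>J - {k0}. W' i k * W' j k)"
      using less.hyps[of "J - {k0}" W'] less.prems by auto
    have "(\<Sum>k\<in>J - {k0}. W' i k * W' j k) = (\<Sum>k\<in>J. W i k * W j k)"
      if "i \<in> {1..m}" "j \<in> {1..m}" for i j
      using sum.remove[OF less.prems k0, of "\<lambda>k. W' i k * W' j k"] W'0 that T(1)
      unfolding W'_def by simp
    with V show ?thesis by auto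
  qed
qed

lemma gram_convex_combination:
  fixes V1 V2 :: "nat \<Rightarrow> nat \<Rightarrow> real"
  assumes "0 \<le> \<theta>" "\<theta> \<le> 1"
  shows "\<exists>V. \<forall>i\<in>{1..m}. \<forall>j\<in>{1..m}. (\<Sum>k\<in>{1..m}. V i k * V j k) =
     (1 - \<theta>) * (\<Sum>k\<in>{1..m}. V1 i k * V1 j k) + \<theta> * (\<Sum>k\<in>{1..m}. V2 i k * V2 j k)"
proof -
  \<comment> \<open>Stack the scaled rows of \<open>V1\<close> and \<open>V2\<close> side by side in \<open>2m\<close> coordinates.\<close>
  define W where
    "W = (\<lambda>i k. if k \<le> m then sqrt (1 - \<theta>) * V1 i k else sqrt \<theta> * V2 i (k - m))"
  have "(\<Sum>k\<in>{1..m+m}. W i k * W j k) =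
      (1 - \<theta>) * (\<Sum>k\<in>{1..m}. V1 i k * V1 j k) + \<theta> * (\<Sum>k\<in>{1..m}. V2 i k * V2 j k)" for i j
  proof -
    have "(\<Sum>k\<in>{1..m+m}. W i k * W j k) =
        (\<Sum>k\<in>{1..m}. W i k * W j k) + (\<Sum>k\<in>{m+1..m+m}. W i k * W j k)"
      by (rule sum.ub_add_nat) simp
    also have "(\<Sum>k\<in>{m+1..m+m}. W i k * W j k) = (\<Sum>k\<in>{1..m}. W i (k + m) * W j (k + m))"
      using sum.shift_bounds_cl_nat_ivl[of "\<lambda>k. W i k * W j k" 1 m m] by (simp add: add.commute)
    also have "\<dots> = (\<Sum>k\<in>{1..m}. \<theta> * (V2 i k * V2 j k))"
      unfolding W_def using assms by (intro sum.cong) (auto simp: algebra_simps)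
    also have "(\<Sum>k\<in>{1..m}. W i k * W j k) = (\<Sum>k\<in>{1..m}. (1 - \<theta>) * (V1 i k * V1 j k))"
      unfolding W_def using assms by (intro sum.cong) (auto simp: algebra_simps)
    finally show ?thesis by (simp add: sum_distrib_left)
  qed
  then show ?thesis using gram_in_dimension[of "{1..m+m}" m W] by auto
qed

section \<open>An approximate minimax lemma\<close>

lemma sq_pos_part_shift_le:
  fixes a x :: real
  shows "(max (a - x) 0)\<^sup>2 \<le> (max a 0 - x)\<^sup>2"
proof (cases "0 \<le> a - x")
  case True
  then have "(a - x)\<^sup>2 \<le> (max a 0 - x)\<^sup>2" by (intro power_mono) auto
  with True show ?thesis by simp
qed simp

text \<open>First-order optimality condition for the point of the family closest to the orthant
  \<open>{y. \<forall>i. y i \<ge> \<delta>}\<close>.\<close>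

lemma min_shortfall_variational_ineq:
  fixes \<phi> :: "'v \<Rightarrow> nat \<Rightarrow> real"
  assumes conv: "\<And>V1 V2 \<theta>. V1 \<in> G \<Longrightarrow> V2 \<in> G \<Longrightarrow> 0 \<le> \<theta> \<Longrightarrow> \<theta> \<le> 1 \<Longrightarrow>
                 \<exists>V\<in>G. \<forall>i\<in>M. \<phi> V i = (1 - \<theta>) * \<phi> V1 i + \<theta> * \<phi> V2 i"
    and V0: "V0 \<in> G" and V: "V \<in> G"
    and min: "\<And>V. V \<in> G \<Longrightarrow>
      (\<Sum>i\<in>M. (max (\<delta> - \<phi> V0 i) 0)\<^sup>2) \<le> (\<Sum>i\<in>M. (max (\<delta> - \<phi> V i) 0)\<^sup>2)"
  shows "(\<Sum>i\<in>M. max (\<delta> - \<phi> V0 i) 0 * (\<phi> V i - \<phi> V0 i)) \<le> 0"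
proof (rule ccontr)
  define u where "u = (\<lambda>i. max (\<delta> - \<phi> V0 i) 0)"
  define b where "b = (\<lambda>i. \<phi> V i - \<phi> V0 i)"
  define S where "S = (\<Sum>i\<in>M. u i * b i)"
  define B where "B = (\<Sum>i\<in>M. b i * b i)"
  assume "\<not> ?thesis"
  then have S: "S > 0" unfolding S_def u_def b_def by simp
  have B: "B \<ge> 0" unfolding B_def by (intro sum_nonneg) auto
  define t where "t = min 1 (S / (B + 1))"
  have t: "0 < t" "t \<le> 1" unfolding t_def using S B by auto
  have "t * B \<le> S / (B + 1) * B" unfolding t_def using B by (intro mult_right_mono) auto
  also have "\<dots> < S" using S B by (simp add: field_simps)
  finally have tB: "t * B < S" .
  obtain Vt where Vt: "Vt \<in> G" "\<forall>i\<in>M. \<phi> Vt i = (1 - t) * \<phi> V0 i + t * \<phi> V i"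
    using conv[OF V0 V, of t] t by auto
  have "(\<Sum>i\<in>M. (u i)\<^sup>2) \<le> (\<Sum>i\<in>M. (max (\<delta> - \<phi> Vt i) 0)\<^sup>2)"
    using min[OF Vt(1)] unfolding u_def .
  also have "\<dots> \<le> (\<Sum>i\<in>M. (u i - t * b i)\<^sup>2)"
  proof (intro sum_mono)
    fix i assume "i \<in> M"
    then have "\<delta> - \<phi> Vt i = (\<delta> - \<phi> V0 i) - t * b i"
      using Vt(2) unfolding b_def by (simp add: algebra_simps)
    then show "(max (\<delta> - \<phi> Vt i) 0)\<^sup>2 \<le> (u i - t * b i)\<^sup>2"
      unfolding u_def by (simp only: sq_pos_part_shift_le)
  qed
  also have "\<dots> = (\<Sum>i\<in>M. (u i)\<^sup>2) - 2 * t * S + t * t * B"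
    unfolding S_def B_def
    by (simp add: power2_eq_square algebra_simps sum.distrib sum_subtractf sum_distrib_left)
  finally have "2 * S \<le> t * B" using t(1) by (simp add: mult.assoc)
  with tB S show False by simp
qed

text \<open>The weights are the normalised shortfall of the point of the family closest to the orthant
  \<open>{y. \<forall>i. y i \<ge> \<delta>}\<close>.\<close>

lemma approximate_minimax_weights:
  fixes \<phi> :: "'v::topological_space \<Rightarrow> nat \<Rightarrow> real"
  assumes "finite M" and "\<delta> > 0"
    and "compact G" and "G \<noteq> {}" and cont: "\<And>i. continuous_on G (\<lambda>V. \<phi> V i)"
    and conv: "\<And>V1 V2 \<theta>. V1 \<in> G \<Longrightarrow> V2 \<in> G \<Longrightarrow> 0 \<le> \<theta> \<Longrightarrow> \<theta> \<le> 1 \<Longrightarrow>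
                 \<exists>V\<in>G. \<forall>i\<in>M. \<phi> V i = (1 - \<theta>) * \<phi> V1 i + \<theta> * \<phi> V2 i"
    and nonpos: "\<And>V. V \<in> G \<Longrightarrow> \<exists>i\<in>M. \<phi> V i \<le> 0"
  shows "\<exists>w. (\<forall>i\<in>M. w i \<ge> 0) \<and> (\<Sum>i\<in>M. w i) = 1 \<and> (\<forall>V\<in>G. (\<Sum>i\<in>M. w i * \<phi> V i) \<le> \<delta>)"
proof -
  have "continuous_on G (\<lambda>V. \<Sum>i\<in>M. (max (\<delta> - \<phi> V i) 0)\<^sup>2)"
    by (intro continuous_intros cont)
  then obtain V0 where V0: "V0 \<in> G"
    and min: "\<And>V. V \<in> G \<Longrightarrow>
      (\<Sum>i\<in>M. (max (\<delta> - \<phi> V0 i) 0)\<^sup>2) \<le> (\<Sum>i\<in>M. (max (\<delta> - \<phi> V i) 0)\<^sup>2)"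
    using continuous_attains_inf[OF \<open>compact G\<close> \<open>G \<noteq> {}\<close>] by blast
  define u where "u = (\<lambda>i. max (\<delta> - \<phi> V0 i) 0)"
  have u0: "u i \<ge> 0" for i unfolding u_def by simp
  obtain i0 where i0: "i0 \<in> M" "\<phi> V0 i0 \<le> 0" using nonpos[OF V0] by blast
  have "0 < u i0" using i0 \<open>\<delta> > 0\<close> unfolding u_def by simp
  also have "u i0 \<le> (\<Sum>i\<in>M. u i)" by (rule member_le_sum) (use i0 \<open>finite M\<close> u0 in auto)
  finally have su: "(\<Sum>i\<in>M. u i) > 0" .
  have "(\<Sum>i\<in>M. u i * \<phi> V i) \<le> \<delta> * (\<Sum>i\<in>M. u i)" if V: "V \<in> G" for V
  proof -
    have "(\<Sum>i\<in>M. u i * \<phi> V i) \<le> (\<Sum>i\<in>M. u i * \<phi> V0 i)"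
      using min_shortfall_variational_ineq[OF conv V0 V min] unfolding u_def
      by (simp add: algebra_simps sum_subtractf)
    also have "\<dots> \<le> (\<Sum>i\<in>M. \<delta> * u i)"
    proof (intro sum_mono)
      fix i
      show "u i * \<phi> V0 i \<le> \<delta> * u i"
        using mult_left_mono[of "\<phi> V0 i" \<delta> "u i"] u0[of i]
        by (cases "\<phi> V0 i \<le> \<delta>") (auto simp: u_def mult.commute)
    qed
    finally show ?thesis by (simp add: sum_distrib_left)
  qed
  then show ?thesis using su u0
    by (intro exI[of _ "\<lambda>i. u i / (\<Sum>i\<in>M. u i)"])
       (auto simp: sum_divide_distrib[symmetric] field_simps)
qed

section \<open>Quadratic forms and the Laplacian\<close>

definition QF :: "nat \<Rightarrow> (nat \<Rightarrow> nat \<Rightarrow> real) \<Rightarrow> (nat \<Rightarrow> real) \<Rightarrow> real" where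
  "QF m A x = (\<Sum>a\<in>{1..m}. \<Sum>b\<in>{1..m}. x a * A a b * x b)"

lemma nsd_iff_QF: "nsd m A \<longleftrightarrow> (\<forall>x. QF m A x \<le> 0)"
  unfolding nsd_def QF_def ..

lemma QF_cong: "(\<And>a. a \<in> {1..m} \<Longrightarrow> x a = y a) \<Longrightarrow> QF m A x = QF m A y"
  unfolding QF_def by simp

lemma QF_add: "QF m (\<lambda>a b. A a b + B a b) x = QF m A x + QF m B x"
  unfolding QF_def by (simp add: algebra_simps sum.distrib)

lemma QF_diff: "QF m (\<lambda>a b. A a b - B a b) x = QF m A x - QF m B x"
  unfolding QF_def by (simp add: algebra_simps sum_subtractf)

lemma QF_cmult: "QF m (\<lambda>a b. c * A a b) x = c * QF m A x"
  unfolding QF_def by (simp add: algebra_simps sum_distrib_left)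

lemma QF_sum: "QF m (\<lambda>a b. \<Sum>e\<in>E. F e a b) x = (\<Sum>e\<in>E. QF m (F e) x)"
  unfolding QF_def by (simp add: sum_distrib_left sum_distrib_right algebra_simps sum.swap[of _ E])

lemma QF_scale_vector: "QF m A (\<lambda>a. \<kappa> * x a) = \<kappa>\<^sup>2 * QF m A x"
  unfolding QF_def sum_distrib_left by (simp add: power2_eq_square algebra_simps)

lemma sum_delta_mult:
  fixes f :: "nat \<Rightarrow> real"
  assumes "finite S" "a \<in> S"
  shows "(\<Sum>b\<in>S. f b * (if a = b then 1 else 0)) = f a"
proof -
  have "(\<Sum>b\<in>S. f b * (if a = b then 1 else 0)) = (\<Sum>b\<in>S. if a = b then f b else 0)"
    by (intro sum.cong) auto
  then show ?thesis using assms by simp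
qed

lemma QF_idm: "QF m idm x = (\<Sum>a\<in>{1..m}. (x a)\<^sup>2)"
  unfolding QF_def
proof (intro sum.cong refl)
  fix a assume "a \<in> {1..m}"
  have "(\<Sum>b\<in>{1..m}. x a * idm a b * x b) = (\<Sum>b\<in>{1..m}. (x a * x b) * (if a = b then 1 else 0))"
    unfolding idm_def by (intro sum.cong) auto
  with \<open>a \<in> {1..m}\<close> show "(\<Sum>b\<in>{1..m}. x a * idm a b * x b) = (x a)\<^sup>2"
    by (simp add: sum_delta_mult power2_eq_square)
qed

lemma nsd_if_QF_unit_nonpos:
  assumes "\<And>y. (\<Sum>a\<in>{1..m}. (y a)\<^sup>2) = 1 \<Longrightarrow> QF m A y \<le> 0"
  shows "nsd m A"
  unfolding nsd_iff_QF
proof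
  fix x :: "nat \<Rightarrow> real"
  define s where "s = (\<Sum>a\<in>{1..m}. (x a)\<^sup>2)"
  show "QF m A x \<le> 0"
  proof (cases "s = 0")
    case True
    then have "\<forall>a\<in>{1..m}. x a = 0"
      unfolding s_def using sum_nonneg_eq_0_iff[of "{1..m}" "\<lambda>a. (x a)\<^sup>2"] by simp
    then have "QF m A x = QF m A (\<lambda>a. 0)" by (intro QF_cong) simp
    then show ?thesis by (simp add: QF_def)
  next
    case False
    then have s: "s > 0" unfolding s_def by (simp add: order_le_neq_trans sum_nonneg)
    define y where "y = (\<lambda>a. x a / sqrt s)"
    have "(\<Sum>a\<in>{1..m}. (y a)\<^sup>2) = 1"
      using s unfolding y_def s_def by (simp add: power_divide sum_divide_distrib[symmetric])
    then have "QF m A y \<le> 0" by (rule assms)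
    moreover have "QF m A x = QF m A (\<lambda>a. sqrt s * y a)"
      using s unfolding y_def by simp
    ultimately show ?thesis using s by (simp add: QF_scale_vector mult_nonneg_nonpos)
  qed
qed

lemma linear_term_zero_if_quadratic_nonpos:
  fixes r \<beta> :: real
  assumes "\<And>t. 2 * t * r + t * t * \<beta> \<le> 0"
  shows "r = 0"
proof (rule ccontr)
  assume "r \<noteq> 0"
  define d where "d = \<bar>\<beta>\<bar> + 1"
  have d: "d > 0" "2 * d + \<beta> > 0" unfolding d_def by auto
  have "2 * (r / d) * r + (r / d) * (r / d) * \<beta> = r * r * (2 * d + \<beta>) / (d * d)"
    using d by (simp add: field_simps)
  also have "\<dots> > 0"
  proof -
    have "r * r > 0" using \<open>r \<noteq> 0\<close> not_real_square_gt_zero by blast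
    with d show ?thesis by (intro divide_pos_pos mult_pos_pos[of "r * r"]) simp_all
  qed
  finally show False using assms[of "r / d"] by simp
qed

lemma nsd_null_vector:
  assumes nsd: "nsd m B" and sym: "\<And>a b. B a b = B b a"
    and x0: "QF m B x = 0" and a: "a \<in> {1..m}"
  shows "(\<Sum>b\<in>{1..m}. B a b * x b) = 0"
proof (rule linear_term_zero_if_quadratic_nonpos)
  fix t
  define e where "e = (\<lambda>b. if a = b then (1::real) else 0)"
  have row: "(\<Sum>b\<in>{1..m}. f b * e b) = f a" for f :: "nat \<Rightarrow> real"
    unfolding e_def using a by (simp add: sum_delta_mult)
  define r where "r = (\<Sum>b\<in>{1..m}. B a b * x b)"
  have "(x a' + t * e a') * B a' b * (x b + t * e b) = x a' * B a' b * x b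
      + t * (x a' * B a' b * e b) + t * (e a' * B a' b * x b) + t * t * (e a' * B a' b * e b)"
    for a' b by (simp add: algebra_simps)
  then have "QF m B (\<lambda>b. x b + t * e b) = QF m B x
      + t * (\<Sum>a'\<in>{1..m}. \<Sum>b\<in>{1..m}. x a' * B a' b * e b)
      + t * (\<Sum>a'\<in>{1..m}. e a' * (\<Sum>b\<in>{1..m}. B a' b * x b))
      + t * t * (\<Sum>a'\<in>{1..m}. \<Sum>b\<in>{1..m}. e a' * B a' b * e b)"
    unfolding QF_def by (simp add: sum.distrib sum_distrib_left mult.assoc)
  also have "(\<Sum>a'\<in>{1..m}. \<Sum>b\<in>{1..m}. x a' * B a' b * e b) = r"
    unfolding row r_def by (simp add: sym mult.commute)
  also have "(\<Sum>a'\<in>{1..m}. e a' * (\<Sum>b\<in>{1..m}. B a' b * x b)) = r"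
    unfolding r_def by (subst mult.commute) (rule row)
  also have "(\<Sum>a'\<in>{1..m}. \<Sum>b\<in>{1..m}. e a' * B a' b * e b) = B a a"
    unfolding row by (subst mult.commute) (rule row)
  finally have "QF m B (\<lambda>b. x b + t * e b) = QF m B x + 2 * t * r + t * t * B a a"
    by simp
  moreover have "QF m B (\<lambda>b. x b + t * e b) \<le> 0" using nsd unfolding nsd_iff_QF by blast
  ultimately show "2 * t * (\<Sum>b\<in>{1..m}. B a b * x b) + t * t * B a a \<le> 0"
    using x0 unfolding r_def by simp
qed

lemma QF_Lij:
  assumes "i \<in> {1..m}" "j \<in> {1..m}"
  shows "QF m (Lij i j) x = (x i - x j)\<^sup>2"
proof -
  have lin: "(\<Sum>a\<in>{1..m}. x a * (delta i a - delta j a)) = x i - x j"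
    using assms unfolding delta_def
    by (simp add: right_diff_distrib sum_subtractf if_distrib[of "(*) _"] cong: if_cong)
  have "QF m (Lij i j) x =
      (\<Sum>a\<in>{1..m}. x a * (delta i a - delta j a)) * (\<Sum>b\<in>{1..m}. x b * (delta i b - delta j b))"
    unfolding QF_def Lij_def sum_product by (intro sum.cong refl) (simp add: algebra_simps)
  then show ?thesis unfolding lin by (simp add: power2_eq_square)
qed

lemma QF_Lw:
  assumes "\<And>i j. (i, j) \<in> E1 \<union> E2 \<Longrightarrow> i \<in> {1..2*N} \<and> j \<in> {1..2*N}"
  shows "QF (2*N) (Lw N E1 E2 w) x =
    (\<Sum>(i, j)\<in>E1 \<union> E2. (x i - x j)\<^sup>2) + (\<Sum>i\<in>{1..N}. w i * (x i - x (N + i))\<^sup>2)"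
proof -
  have "QF (2*N) (L0 E1 E2) x = (\<Sum>(i, j)\<in>E1 \<union> E2. QF (2*N) (Lij i j) x)"
    unfolding L0_def split_def by (rule QF_sum)
  also have "\<dots> = (\<Sum>(i, j)\<in>E1 \<union> E2. (x i - x j)\<^sup>2)"
  proof (intro sum.cong refl, clarify)
    fix i j assume "(i, j) \<in> E1 \<union> E2"
    then show "QF (2*N) (Lij i j) x = (x i - x j)\<^sup>2" using assms by (intro QF_Lij) auto
  qed
  finally have L0: "QF (2*N) (L0 E1 E2) x = \<dots>" .
  have "QF (2*N) (\<lambda>a b. \<Sum>i\<in>{1..N}. w i * Lij i (N + i) a b) x =
      (\<Sum>i\<in>{1..N}. w i * (x i - x (N + i))\<^sup>2)"
    unfolding QF_sum by (intro sum.cong refl) (simp add: QF_cmult QF_Lij)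
  then show ?thesis unfolding Lw_def QF_add L0 by simp
qed

lemma Lij_sym: "Lij i j a b = Lij i j b a"
  unfolding Lij_def by simp

lemma Lw_sym: "Lw N E1 E2 w a b = Lw N E1 E2 w b a"
  unfolding Lw_def L0_def by (simp add: Lij_sym)

section \<open>Normalised embeddings\<close>

definition gram :: "nat \<Rightarrow> (nat \<Rightarrow> nat \<Rightarrow> real) \<Rightarrow> nat \<Rightarrow> nat \<Rightarrow> real" where
  "gram m V i j = (\<Sum>k\<in>{1..m}. V i k * V j k)"

lemma sqdist_gram: "sqdist m (V i) (V j) = gram m V i i - 2 * gram m V i j + gram m V j j"
  unfolding sqdist_def gram_def
  by (simp add: power2_eq_square algebra_simps sum.distrib sum_subtractf sum_distrib_left)

lemma sqnorm_gram: "sqnorm m (V i) = gram m V i i"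
  unfolding sqnorm_def gram_def by (simp add: power2_eq_square)

definition total_sqnorm :: "nat \<Rightarrow> (nat \<Rightarrow> nat \<Rightarrow> real) \<Rightarrow> real" where
  "total_sqnorm N V = (\<Sum>a\<in>{1..2*N}. sqnorm (2*N) (V a))"

text \<open>Up to the constant \<open>g\<close>, the Lagrangian of the embedding problem for the multiplier \<open>c\<close> on
  the \<open>i\<close>-th interlayer constraint and \<open>g\<close> on the normalisation constraint.\<close>

definition excess ::
  "nat \<Rightarrow> (nat \<times> nat) set \<Rightarrow> (nat \<times> nat) set \<Rightarrow> real \<Rightarrow> real \<Rightarrow> (nat \<Rightarrow> nat \<Rightarrow> real) \<Rightarrow> nat \<Rightarrow> real"
  where
  "excess N E1 E2 c g V i = (\<Sum>(a, b)\<in>E1 \<union> E2. sqdist (2*N) (V a) (V b))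
      + c * sqdist (2*N) (V i) (V (N + i)) - g * total_sqnorm N V"

text \<open>Normalised embeddings, with coordinates outside \<open>{1..2N}\<close> set to zero so that the set is
  compact in the product topology.\<close>

definition unit_embeddings :: "nat \<Rightarrow> (nat \<Rightarrow> nat \<Rightarrow> real) set" where
  "unit_embeddings N = {V. (\<forall>i k. V i k \<in> (if i \<in> {1..2*N} \<and> k \<in> {1..2*N} then {-1..1} else {0}))
                           \<and> total_sqnorm N V = 1}"

lemma excess_gram_combination:
  assumes E: "\<And>a b. (a, b) \<in> E1 \<union> E2 \<Longrightarrow> a \<in> {1..2*N} \<and> b \<in> {1..2*N}"
    and i: "i \<in> {1..N}"
    and G: "\<And>a b. a \<in> {1..2*N} \<Longrightarrow> b \<in> {1..2*N} \<Longrightarrow>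
      gram (2*N) V a b = (1 - \<theta>) * gram (2*N) V1 a b + \<theta> * gram (2*N) V2 a b"
  shows "excess N E1 E2 c g V i = (1 - \<theta>) * excess N E1 E2 c g V1 i + \<theta> * excess N E1 E2 c g V2 i"
proof -
  have sd: "sqdist (2*N) (V a) (V b) =
      (1 - \<theta>) * sqdist (2*N) (V1 a) (V1 b) + \<theta> * sqdist (2*N) (V2 a) (V2 b)"
    if "a \<in> {1..2*N}" "b \<in> {1..2*N}" for a b
  proof -
    have "gram (2*N) V a a = (1 - \<theta>) * gram (2*N) V1 a a + \<theta> * gram (2*N) V2 a a"
      "gram (2*N) V a b = (1 - \<theta>) * gram (2*N) V1 a b + \<theta> * gram (2*N) V2 a b"
      "gram (2*N) V b b = (1 - \<theta>) * gram (2*N) V1 b b + \<theta> * gram (2*N) V2 b b"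
      using G that by auto
    then show ?thesis unfolding sqdist_gram by (simp add: algebra_simps)
  qed
  have edges: "(\<Sum>(a, b)\<in>E1 \<union> E2. sqdist (2*N) (V a) (V b)) =
      (1 - \<theta>) * (\<Sum>(a, b)\<in>E1 \<union> E2. sqdist (2*N) (V1 a) (V1 b))
      + \<theta> * (\<Sum>(a, b)\<in>E1 \<union> E2. sqdist (2*N) (V2 a) (V2 b))"
    unfolding sum_distrib_left sum.distrib[symmetric] using E sd by (intro sum.cong) auto
  have norm: "total_sqnorm N V = (1 - \<theta>) * total_sqnorm N V1 + \<theta> * total_sqnorm N V2"
    unfolding total_sqnorm_def sqnorm_gram sum_distrib_left sum.distrib[symmetric]
    using G by (intro sum.cong) auto
  have pair: "sqdist (2*N) (V i) (V (N + i)) =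
      (1 - \<theta>) * sqdist (2*N) (V1 i) (V1 (N + i)) + \<theta> * sqdist (2*N) (V2 i) (V2 (N + i))"
    using i by (intro sd) auto
  show ?thesis unfolding excess_def edges norm pair by (simp add: algebra_simps)
qed

lemma unit_embeddingsI:
  assumes "\<And>i k. \<not> (i \<in> {1..2*N} \<and> k \<in> {1..2*N}) \<Longrightarrow> V i k = 0" and "total_sqnorm N V = 1"
  shows "V \<in> unit_embeddings N"
proof -
  have "V i k \<in> {-1..1}" if ik: "i \<in> {1..2*N}" "k \<in> {1..2*N}" for i k
  proof -
    have "(V i k)\<^sup>2 \<le> sqnorm (2*N) (V i)" unfolding sqnorm_def
      by (rule member_le_sum) (use ik in auto)
    also have "\<dots> \<le> total_sqnorm N V" unfolding total_sqnorm_def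
      by (rule member_le_sum) (use ik in \<open>auto simp: sqnorm_def intro: sum_nonneg\<close>)
    finally have "(V i k)\<^sup>2 \<le> 1" using assms(2) by simp
    then show ?thesis using abs_square_le_1 by (auto simp: abs_le_iff)
  qed
  then show ?thesis unfolding unit_embeddings_def using assms by auto
qed

lemma unit_embeddings_excess_convex:
  assumes E: "\<And>a b. (a, b) \<in> E1 \<union> E2 \<Longrightarrow> a \<in> {1..2*N} \<and> b \<in> {1..2*N}"
    and V1: "V1 \<in> unit_embeddings N" and V2: "V2 \<in> unit_embeddings N"
    and "0 \<le> \<theta>" "\<theta> \<le> 1"
  shows "\<exists>V\<in>unit_embeddings N. \<forall>i\<in>{1..N}.
    excess N E1 E2 c g V i = (1 - \<theta>) * excess N E1 E2 c g V1 i + \<theta> * excess N E1 E2 c g V2 i"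
proof -
  obtain V0 where V0: "\<forall>a\<in>{1..2*N}. \<forall>b\<in>{1..2*N}. (\<Sum>k\<in>{1..2*N}. V0 a k * V0 b k) =
      (1 - \<theta>) * (\<Sum>k\<in>{1..2*N}. V1 a k * V1 b k) + \<theta> * (\<Sum>k\<in>{1..2*N}. V2 a k * V2 b k)"
    using gram_convex_combination[OF \<open>0 \<le> \<theta>\<close> \<open>\<theta> \<le> 1\<close>, of "2*N" V1 V2] by blast
  define V where "V = (\<lambda>a k. if a \<in> {1..2*N} \<and> k \<in> {1..2*N} then V0 a k else 0)"
  have G: "gram (2*N) V a b = (1 - \<theta>) * gram (2*N) V1 a b + \<theta> * gram (2*N) V2 a b"
    if "a \<in> {1..2*N}" "b \<in> {1..2*N}" for a b
  proof -
    have "gram (2*N) V a b = (\<Sum>k\<in>{1..2*N}. V0 a k * V0 b k)"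
      unfolding gram_def V_def using that by (intro sum.cong) auto
    then show ?thesis using V0 that unfolding gram_def by simp
  qed
  have "total_sqnorm N V = (1 - \<theta>) * total_sqnorm N V1 + \<theta> * total_sqnorm N V2"
    unfolding total_sqnorm_def sqnorm_gram sum_distrib_left sum.distrib[symmetric]
    using G by (intro sum.cong) auto
  then have "V \<in> unit_embeddings N"
    using V1 V2 by (intro unit_embeddingsI) (auto simp: V_def unit_embeddings_def)
  then show ?thesis using excess_gram_combination[OF E _ G] by blast
qed

lemma continuous_on_coordinate [continuous_intros]:
  "continuous_on S (\<lambda>V::nat \<Rightarrow> nat \<Rightarrow> real. V a k)"
proof -
  have "continuous_on UNIV (\<lambda>V::nat \<Rightarrow> nat \<Rightarrow> real. V a k)"
    by (rule continuous_on_product_then_coordinatewise[OF continuous_on_product_coordinates])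
  then show ?thesis by (rule continuous_on_subset) auto
qed

lemma continuous_on_sqdist [continuous_intros]:
  "continuous_on S (\<lambda>V::nat \<Rightarrow> nat \<Rightarrow> real. sqdist m (V a) (V b))"
  unfolding sqdist_def by (intro continuous_intros)

lemma continuous_on_total_sqnorm [continuous_intros]: "continuous_on S (total_sqnorm N)"
  unfolding total_sqnorm_def sqnorm_def by (intro continuous_intros)

lemma continuous_on_excess [continuous_intros]:
  "continuous_on S (\<lambda>V. excess N E1 E2 c g V i)"
  unfolding excess_def split_def by (intro continuous_intros)

lemma compact_PiE_UNIV:
  fixes A :: "'i \<Rightarrow> 'b::topological_space set"
  assumes "\<And>i. compact (A i)"
  shows "compact (PiE UNIV A)"
proof -
  have "compactin (product_topology (\<lambda>i. euclidean) UNIV) (PiE UNIV A)"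
    using assms by (simp add: compactin_PiE)
  then show ?thesis by (simp add: euclidean_product_topology)
qed

lemma compact_unit_embeddings: "compact (unit_embeddings N)"
proof -
  define S where "S = (\<lambda>i k. if i \<in> {1..2*N} \<and> k \<in> {1..2*N} then {-1..1} else {0::real})"
  have "compact (PiE UNIV (\<lambda>i. PiE UNIV (S i)))"
    by (intro compact_PiE_UNIV) (simp add: S_def)
  moreover have "PiE UNIV (\<lambda>i. PiE UNIV (S i)) = {V. \<forall>i k. V i k \<in> S i k}"
    by (auto simp: PiE_iff)
  moreover have "closed {V. total_sqnorm N V = 1}"
    by (rule closed_Collect_eq) (intro continuous_intros)+
  moreover have "unit_embeddings N = {V. \<forall>i k. V i k \<in> S i k} \<inter> {V. total_sqnorm N V = 1}"
    unfolding unit_embeddings_def S_def by auto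
  ultimately show ?thesis by (simp add: compact_Int_closed)
qed

lemma excess_nonpos_if_embed_optimal:
  assumes "N > 0" and opt: "embed_optimal N E1 E2 c xi v" and V: "V \<in> unit_embeddings N"
  shows "\<exists>i\<in>{1..N}. excess N E1 E2 c (embed_obj N E1 E2 c xi v) V i \<le> 0"
proof -
  define D where "D = (\<lambda>i. sqdist (2*N) (V i) (V (N + i))) ` {1..N}"
  have D: "finite D" "D \<noteq> {}" unfolding D_def using \<open>N > 0\<close> by auto
  obtain i0 where i0: "i0 \<in> {1..N}" "Min D = sqdist (2*N) (V i0) (V (N + i0))"
    using Min_in[OF D] unfolding D_def by auto
  \<comment> \<open>\<open>V\<close> is feasible with the largest admissible \<open>\<xi>\<close>, attained at the edge \<open>i0\<close>.\<close>
  have norm: "total_sqnorm N V = 1" using V unfolding unit_embeddings_def by blast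
  have "embed_feasible N (Min D) V"
    unfolding embed_feasible_def
  proof
    show "\<forall>i\<in>{1..N}. Min D \<le> sqdist (2*N) (V i) (V (N + i))"
      using D unfolding D_def by (auto intro: Min_le)
    show "(\<Sum>i\<in>{1..2*N}. sqnorm (2*N) (V i)) = 1" using norm unfolding total_sqnorm_def .
  qed
  then have "embed_obj N E1 E2 c (Min D) V \<le> embed_obj N E1 E2 c xi v"
    using opt unfolding embed_optimal_def by blast
  moreover have "excess N E1 E2 c (embed_obj N E1 E2 c xi v) V i0 =
      embed_obj N E1 E2 c (Min D) V - embed_obj N E1 E2 c xi v"
    unfolding excess_def embed_obj_def norm i0(2) by simp
  ultimately show ?thesis using i0(1) by (metis diff_le_0_iff_le)
qed

section \<open>Closing the duality gap\<close>

lemma nsd_shifted_Lw_if_excess_weights: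
  assumes E: "\<And>a b. (a, b) \<in> E1 \<union> E2 \<Longrightarrow> a \<in> {1..2*N} \<and> b \<in> {1..2*N}"
    and sum_one: "(\<Sum>i\<in>{1..N}. \<omega> i) = 1"
    and bound: "\<forall>V\<in>unit_embeddings N. (\<Sum>i\<in>{1..N}. \<omega> i * excess N E1 E2 c g V i) \<le> \<delta>"
  shows "nsd (2*N) (\<lambda>a b. Lw N E1 E2 (\<lambda>i. c * \<omega> i) a b - (g + \<delta>) * idm a b)"
proof (rule nsd_if_QF_unit_nonpos)
  fix y :: "nat \<Rightarrow> real"
  assume y: "(\<Sum>a\<in>{1..2*N}. (y a)\<^sup>2) = 1"
  then have "1 \<in> {1..2*N}" by (cases N) auto
  \<comment> \<open>Test the weights against the one-dimensional embedding \<open>y\<close>.\<close>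
  define Vy :: "nat \<Rightarrow> nat \<Rightarrow> real" where "Vy = (\<lambda>a k. if a \<in> {1..2*N} \<and> k = 1 then y a else 0)"
  have sqdist_Vy: "sqdist (2*N) (Vy a) (Vy b) = (y a - y b)\<^sup>2"
    if "a \<in> {1..2*N}" "b \<in> {1..2*N}" for a b
  proof -
    have "sqdist (2*N) (Vy a) (Vy b) = (\<Sum>k\<in>{1..2*N}. if k = 1 then (y a - y b)\<^sup>2 else 0)"
      unfolding sqdist_def Vy_def using that by (intro sum.cong) auto
    with \<open>1 \<in> {1..2*N}\<close> show ?thesis by simp
  qed
  have "sqnorm (2*N) (Vy a) = (y a)\<^sup>2" if "a \<in> {1..2*N}" for a
  proof -
    have "sqnorm (2*N) (Vy a) = (\<Sum>k\<in>{1..2*N}. if k = 1 then (y a)\<^sup>2 else 0)"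
      unfolding sqnorm_def Vy_def using that by (intro sum.cong) auto
    with \<open>1 \<in> {1..2*N}\<close> show ?thesis by simp
  qed
  then have "total_sqnorm N Vy = 1" using y unfolding total_sqnorm_def by simp
  then have "Vy \<in> unit_embeddings N" by (intro unit_embeddingsI) (auto simp: Vy_def)
  define Q0 where "Q0 = (\<Sum>(a, b)\<in>E1 \<union> E2. (y a - y b)\<^sup>2)"
  have "(\<Sum>(a, b)\<in>E1 \<union> E2. sqdist (2*N) (Vy a) (Vy b)) = Q0"
    unfolding Q0_def using E sqdist_Vy by (intro sum.cong) auto
  then have excess_Vy: "excess N E1 E2 c g Vy i = Q0 + c * (y i - y (N + i))\<^sup>2 - g"
    if "i \<in> {1..N}" for i
    using that \<open>total_sqnorm N Vy = 1\<close> sqdist_Vy[of i "N + i"] unfolding excess_def by simp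
  have "(\<Sum>i\<in>{1..N}. \<omega> i * excess N E1 E2 c g Vy i)
      = (\<Sum>i\<in>{1..N}. \<omega> i * (Q0 - g) + c * \<omega> i * (y i - y (N + i))\<^sup>2)"
    by (intro sum.cong refl) (simp add: excess_Vy algebra_simps)
  also have "\<dots> = Q0 - g + (\<Sum>i\<in>{1..N}. c * \<omega> i * (y i - y (N + i))\<^sup>2)"
    using sum_one by (simp add: sum.distrib sum_distrib_right[symmetric])
  finally have "Q0 - g + (\<Sum>i\<in>{1..N}. c * \<omega> i * (y i - y (N + i))\<^sup>2) \<le> \<delta>"
    using bound \<open>Vy \<in> unit_embeddings N\<close> by auto
  moreover have "QF (2*N) (\<lambda>a b. Lw N E1 E2 (\<lambda>i. c * \<omega> i) a b - (g + \<delta>) * idm a b) y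
      = Q0 + (\<Sum>i\<in>{1..N}. c * \<omega> i * (y i - y (N + i))\<^sup>2) - (g + \<delta>)"
    by (simp only: QF_diff QF_cmult QF_Lw[OF E] QF_idm y) (simp add: Q0_def)
  ultimately show "QF (2*N) (\<lambda>a b. Lw N E1 E2 (\<lambda>i. c * \<omega> i) a b - (g + \<delta>) * idm a b) y \<le> 0"
    by simp
qed

lemma primal_value_le_embed_value:
  assumes E: "\<And>a b. (a, b) \<in> E1 \<union> E2 \<Longrightarrow> a \<in> {1..2*N} \<and> b \<in> {1..2*N}"
    and "c \<ge> 0" and "N > 0"
    and primal: "primal_optimal N E1 E2 c w lam" and embed: "embed_optimal N E1 E2 c xi v"
  shows "lam \<le> embed_obj N E1 E2 c xi v"
proof (rule field_le_epsilon)
  fix \<delta> :: real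
  assume "\<delta> > 0"
  define g where "g = embed_obj N E1 E2 c xi v"
  define v' where "v' = (\<lambda>a k. if a \<in> {1..2*N} \<and> k \<in> {1..2*N} then v a k else 0)"
  have "total_sqnorm N v' = total_sqnorm N v"
    unfolding total_sqnorm_def sqnorm_def v'_def by (intro sum.cong refl) auto
  also have "\<dots> = 1" using embed unfolding embed_optimal_def embed_feasible_def total_sqnorm_def by simp
  finally have "v' \<in> unit_embeddings N" by (intro unit_embeddingsI) (auto simp: v'_def)
  then obtain \<omega> where \<omega>: "\<forall>i\<in>{1..N}. \<omega> i \<ge> 0" "(\<Sum>i\<in>{1..N}. \<omega> i) = 1"
    "\<forall>V\<in>unit_embeddings N. (\<Sum>i\<in>{1..N}. \<omega> i * excess N E1 E2 c g V i) \<le> \<delta>"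
    using approximate_minimax_weights[of "{1..N}" \<delta> "unit_embeddings N" "excess N E1 E2 c g"]
      \<open>\<delta> > 0\<close> compact_unit_embeddings continuous_on_excess unit_embeddings_excess_convex[OF E]
      excess_nonpos_if_embed_optimal[OF \<open>N > 0\<close> embed]
    unfolding g_def by blast
  have "primal_feasible N E1 E2 c (\<lambda>i. c * \<omega> i) (g + \<delta>)"
    unfolding primal_feasible_def
    using nsd_shifted_Lw_if_excess_weights[OF E \<omega>(2,3)] \<omega>(1,2) \<open>c \<ge> 0\<close>
    by (simp add: sum_distrib_left[symmetric])
  then show "lam \<le> embed_obj N E1 E2 c xi v + \<delta>"
    using primal unfolding primal_optimal_def g_def by blast
qed

lemma weighted_sum_ge_of_lower_bounds:
  fixes w d :: "nat \<Rightarrow> real"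
  assumes "\<forall>i\<in>I. w i \<ge> 0" and "(\<Sum>i\<in>I. w i) \<ge> c" and "c \<ge> 0"
    and "\<forall>i\<in>I. d i \<ge> \<xi>" and "\<forall>i\<in>I. d i \<ge> 0"
  shows "c * \<xi> \<le> (\<Sum>i\<in>I. w i * d i)"
proof (cases "\<xi> \<le> 0")
  case True
  then have "c * \<xi> \<le> 0" using \<open>c \<ge> 0\<close> by (simp add: mult_nonneg_nonpos)
  also have "0 \<le> (\<Sum>i\<in>I. w i * d i)" using assms by (intro sum_nonneg) auto
  finally show ?thesis .
next
  case False
  then have "c * \<xi> \<le> (\<Sum>i\<in>I. w i) * \<xi>" using assms by (intro mult_right_mono) auto
  also have "\<dots> \<le> (\<Sum>i\<in>I. w i * d i)"
    unfolding sum_distrib_right using assms by (intro sum_mono mult_left_mono) auto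
  finally show ?thesis .
qed

lemma sum_QF_Lw_columns:
  assumes E: "\<And>a b. (a, b) \<in> E1 \<union> E2 \<Longrightarrow> a \<in> {1..2*N} \<and> b \<in> {1..2*N}"
  shows "(\<Sum>k\<in>{1..2*N}. QF (2*N) (Lw N E1 E2 w) (\<lambda>a. v a k)) =
    (\<Sum>(a, b)\<in>E1 \<union> E2. sqdist (2*N) (v a) (v b)) + (\<Sum>i\<in>{1..N}. w i * sqdist (2*N) (v i) (v (N + i)))"
proof -
  have "(\<Sum>k\<in>{1..2*N}. QF (2*N) (Lw N E1 E2 w) (\<lambda>a. v a k)) =
      (\<Sum>k\<in>{1..2*N}. \<Sum>e\<in>E1 \<union> E2. (v (fst e) k - v (snd e) k)\<^sup>2)
      + (\<Sum>k\<in>{1..2*N}. \<Sum>i\<in>{1..N}. w i * (v i k - v (N + i) k)\<^sup>2)"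
    by (simp only: QF_Lw[OF E] split_def sum.distrib)
  also have "\<dots> = (\<Sum>e\<in>E1 \<union> E2. \<Sum>k\<in>{1..2*N}. (v (fst e) k - v (snd e) k)\<^sup>2)
      + (\<Sum>i\<in>{1..N}. \<Sum>k\<in>{1..2*N}. w i * (v i k - v (N + i) k)\<^sup>2)"
    by (simp only: sum.swap[of _ "{1..2*N}"])
  finally show ?thesis unfolding sqdist_def split_def sum_distrib_left .
qed

lemma sum_QF_idm_columns:
  "(\<Sum>k\<in>{1..2*N}. QF (2*N) idm (\<lambda>a. v a k)) = (\<Sum>a\<in>{1..2*N}. sqnorm (2*N) (v a))"
  unfolding QF_idm sqnorm_def by (rule sum.swap)

lemma embed_column_eigenvector:
  assumes E: "\<And>a b. (a, b) \<in> E1 \<union> E2 \<Longrightarrow> a \<in> {1..2*N} \<and> b \<in> {1..2*N}"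
    and "c \<ge> 0" and pf: "primal_feasible N E1 E2 c w lam" and ef: "embed_feasible N xi v"
    and gap: "lam \<le> embed_obj N E1 E2 c xi v"
    and a: "a \<in> {1..2*N}" and k: "k \<in> {1..2*N}"
  shows "(\<Sum>b\<in>{1..2*N}. Lw N E1 E2 w a b * v b k) = lam * v a k"
proof -
  define B where "B = (\<lambda>a b. Lw N E1 E2 w a b - lam * idm a b)"
  have nsd: "nsd (2*N) B" using pf unfolding primal_feasible_def B_def by blast
  then have nonpos: "QF (2*N) B x \<le> 0" for x unfolding nsd_iff_QF by blast
  have "c * xi \<le> (\<Sum>i\<in>{1..N}. w i * sqdist (2*N) (v i) (v (N + i)))"
    using pf ef \<open>c \<ge> 0\<close> unfolding primal_feasible_def embed_feasible_def
    by (intro weighted_sum_ge_of_lower_bounds) (auto simp: sqdist_def intro: sum_nonneg)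
  moreover have "(\<Sum>k\<in>{1..2*N}. QF (2*N) B (\<lambda>a. v a k)) =
      (\<Sum>k\<in>{1..2*N}. QF (2*N) (Lw N E1 E2 w) (\<lambda>a. v a k))
      - lam * (\<Sum>k\<in>{1..2*N}. QF (2*N) idm (\<lambda>a. v a k))"
    unfolding B_def QF_diff QF_cmult by (simp add: sum_subtractf sum_distrib_left)
  ultimately have "0 \<le> (\<Sum>k\<in>{1..2*N}. QF (2*N) B (\<lambda>a. v a k))"
    using gap ef by (simp only: sum_QF_Lw_columns[OF E] sum_QF_idm_columns)
      (simp add: embed_obj_def embed_feasible_def)
  moreover have "(\<Sum>k\<in>{1..2*N}. QF (2*N) B (\<lambda>a. v a k)) \<le> 0"
    using nonpos by (simp add: sum_nonpos)
  ultimately have "(\<Sum>k\<in>{1..2*N}. - QF (2*N) B (\<lambda>a. v a k)) = 0"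
    by (simp add: sum_negf)
  then have null: "QF (2*N) B (\<lambda>a. v a k) = 0"
    using sum_nonneg_eq_0_iff[of "{1..2*N}" "\<lambda>k. - QF (2*N) B (\<lambda>a. v a k)"] nonpos k
    by simp
  have "(\<Sum>b\<in>{1..2*N}. B a b * v b k) = 0"
    by (rule nsd_null_vector[OF nsd _ null a]) (simp add: B_def Lw_sym idm_def)
  moreover have "(\<Sum>b\<in>{1..2*N}. idm a b * v b k) = v a k"
    using sum_delta_mult[of "{1..2*N}" a "\<lambda>b. v b k"] a by (simp add: idm_def mult.commute)
  ultimately show ?thesis
    unfolding B_def by (simp add: left_diff_distrib sum_subtractf mult.assoc sum_distrib_left[symmetric])
qed

theorem proposition5:
  fixes N :: nat and E1 E2 :: "(nat \<times> nat) set" and c lam xi :: real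
    and w :: "nat \<Rightarrow> real" and v :: "nat \<Rightarrow> nat \<Rightarrow> real"
  assumes "simple_graph_on {1..N} E1"
    and "simple_graph_on {N+1..2*N} E2"
    and "c \<ge> 0"
    and "primal_optimal N E1 E2 c w lam"
    and "embed_optimal N E1 E2 c xi v"
  shows "\<forall>p :: nat \<Rightarrow> real. \<forall>a\<in>{1..2*N}.
           (\<Sum>b\<in>{1..2*N}. Lw N E1 E2 w a b * (\<Sum>k\<in>{1..2*N}. p k * v b k))
           = lam * (\<Sum>k\<in>{1..2*N}. p k * v a k)"
proof (cases "N = 0")
  case False
  have E: "\<And>a b. (a, b) \<in> E1 \<union> E2 \<Longrightarrow> a \<in> {1..2*N} \<and> b \<in> {1..2*N}"
    using assms(1,2) unfolding simple_graph_on_def by fastforce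
  have gap: "lam \<le> embed_obj N E1 E2 c xi v"
    using primal_value_le_embed_value[OF E assms(3) _ assms(4,5)] False by simp
  have eig: "(\<Sum>b\<in>{1..2*N}. Lw N E1 E2 w a b * v b k) = lam * v a k"
    if "a \<in> {1..2*N}" "k \<in> {1..2*N}" for a k
    using embed_column_eigenvector[OF E assms(3) _ _ gap that] assms(4,5)
    unfolding primal_optimal_def embed_optimal_def by blast
  show ?thesis
  proof (intro allI ballI)
    fix p :: "nat \<Rightarrow> real" and a
    assume "a \<in> {1..2*N}"
    have "(\<Sum>b\<in>{1..2*N}. Lw N E1 E2 w a b * (\<Sum>k\<in>{1..2*N}. p k * v b k)) =
        (\<Sum>k\<in>{1..2*N}. p k * (\<Sum>b\<in>{1..2*N}. Lw N E1 E2 w a b * v b k))"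
      by (simp add: sum_distrib_left mult.left_commute) (rule sum.swap)
    also have "\<dots> = lam * (\<Sum>k\<in>{1..2*N}. p k * v a k)"
      using eig[OF \<open>a \<in> {1..2*N}\<close>] by (simp add: sum_distrib_left mult.left_commute)
    finally show "(\<Sum>b\<in>{1..2*N}. Lw N E1 E2 w a b * (\<Sum>k\<in>{1..2*N}. p k * v b k)) =
        lam * (\<Sum>k\<in>{1..2*N}. p k * v a k)" .
  qed
qed simp

end
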